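(* (Label context weakening, subsets.) In DCC, if $\Delta_1;\Gamma\vdash M:A$, the label context $\Delta_2$ is well-formed, and $\Delta_1\subseteq\Delta_2$, then $\Delta_2;\Gamma\vdash M:A$.
   Context: DCC: expressions $x\mid U_i\mid\Pi x{:}A.B\mid L@M\mid\ell_i\{\overline M\}$ with label names $\ell_i$ and lists $\overline M$; type contexts $\Gamma::=\cdot\mid\Gamma,x{:}A$; label contexts $\Delta::=\cdot\mid\Delta,\ell_i(\{\overline x{:}\overline A\},x{:}A\mapsto M:B)$. Reduction: $\Delta\vdash\ell\{\overline M\}@N\triangleright L[\overline M/\overline x,N/x]$ when $\ell(\{\overline x{:}\overline A\},x{:}A\mapsto L:B)\in\Delta$; substitution standard with $\ell\{\overline M\}[N/x]=\ell\{\overline{M[N/x]}\}$. Equivalence $\Delta\vdash M\equiv N$: common reduct, or $\Delta\vdash L\triangleright^*\ell\{\overline N\}$, $\Delta\vdash M\triangleright^*M'$, $\ell(\{\overline x{:}\overline A\},x{:}A\mapsto N:B)\in\Delta$, $\Delta\vdash N[\overline N/\overline x]\equiv M'@x$ give $\Delta\vdash L\equiv M$, and symmetrically. Typing $\Delta;\Gamma\vdash M:A$ and formation $\vdash\Delta;\Gamma$ (mutual): variables from a well-formed context, $U_i:U_{i+1}$, $\Pi x{:}A.B:U_{\max(i,j)}$, $M@N:B[N/x]$ when $M:\Pi x{:}A.B$ and $N:A$, conversion along $\equiv$, and: if $\vdash\Delta;\Gamma$, $\ell(\{\overline x{:}\overline A\},x{:}A\mapsto M:B)\in\Delta$, $|\overline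 M|=|\overline x|$ and $\Delta;\Gamma\vdash M_k:A_k[M_1/x_1,\dots,M_{k-1}/x_{k-1}]$ for all $k$, then $\Delta;\Gamma\vdash\ell\{\overline M\}:\Pi x{:}A[\overline M/\overline x].B[\overline M/\overline x]$. Formation: $\vdash\cdot;\cdot$; fresh label entries may be added when $\Delta;\overline x{:}\overline A\vdash\Pi x{:}A.B:U_i$ and $\Delta;\overline x{:}\overline A,x{:}A\vdash M:B$; $\vdash\Delta;\Gamma,\Delta;\Gamma\vdash A:U_i\Rightarrow\vdash\Delta;\Gamma,x{:}A$. For well-formed label contexts, $\Delta_1\subseteq\Delta_2$ means every entry $\ell_i(\{\overline x{:}\overline A\},x{:}A\mapsto N:B)$ of $\Delta_1$ is also an entry of $\Delta_2$. *)

theory Defs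
  imports Main
begin

text \<open>DCC expressions, locally nameless / de Bruijn style.
  Var i : de Bruijn index (0 = most recently bound variable).
  Pi A B binds index 0 in B.  Lab l Ms is the closure l{Ms}.\<close>

datatype expr =
    Var nat
  | U nat
  | Pi expr expr
  | App expr expr   (infixl "@@" 90)
  | Lab nat "expr list"

definition uprn :: "(nat \<Rightarrow> nat) \<Rightarrow> nat \<Rightarrow> nat" where
  "uprn \<rho> i = (case i of 0 \<Rightarrow> 0 | Suc j \<Rightarrow> Suc (\<rho> j))"

fun ren :: "(nat \<Rightarrow> nat) \<Rightarrow> expr \<Rightarrow> expr" where
  "ren \<rho> (Var i) = Var (\<rho> i)"
| "ren \<rho> (U i) = U i"
| "ren \<rho> (Pi A B) = Pi (ren \<rho> A) (ren (uprn \<rho>) B)"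
| "ren \<rho> (App M N) = App (ren \<rho> M) (ren \<rho> N)"
| "ren \<rho> (Lab l Ms) = Lab l (map (ren \<rho>) Ms)"

definition up :: "(nat \<Rightarrow> expr) \<Rightarrow> nat \<Rightarrow> expr" where
  "up \<sigma> i = (case i of 0 \<Rightarrow> Var 0 | Suc j \<Rightarrow> ren Suc (\<sigma> j))"

fun subst :: "(nat \<Rightarrow> expr) \<Rightarrow> expr \<Rightarrow> expr" where
  "subst \<sigma> (Var i) = \<sigma> i"
| "subst \<sigma> (U i) = U i"
| "subst \<sigma> (Pi A B) = Pi (subst \<sigma> A) (subst (up \<sigma>) B)"
| "subst \<sigma> (App M N) = App (subst \<sigma> M) (subst \<sigma> N)"
| "subst \<sigma> (Lab l Ms) = Lab l (map (subst \<sigma>) Ms)"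

text \<open>Substitution by a list: index i < length ts is replaced by ts!i (so ts!0 replaces
  the innermost bound variable); remaining indices are shifted down.\<close>
definition sbl :: "expr list \<Rightarrow> nat \<Rightarrow> expr" where
  "sbl ts i = (if i < length ts then ts ! i else Var (i - length ts))"

text \<open>A label entry l({xs:As}, x:A |-> M : B) is (l, As, A, M, B).  As!k lives in the
  context of the first k parameters, A in the context of all parameters, M and B in the
  context of all parameters followed by x (index 0 = x).\<close>
type_synonym entry = "nat \<times> expr list \<times> expr \<times> expr \<times> expr"
type_synonym lctx = "entry list"
type_synonym tctx = "expr list"  \<comment> \<open>head = most recently bound variable\<close>

inductive head_red :: "lctx \<Rightarrow> expr \<Rightarrow> expr \<Rightarrow> bool" where
  "(l, As, A, L, B) \<in> set \<Delta> \<Longrightarrow> length Ms = length As \<Longrightarrow>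
     head_red \<Delta> (App (Lab l Ms) N) (subst (sbl (N # rev Ms)) L)"

inductive step :: "lctx \<Rightarrow> expr \<Rightarrow> expr \<Rightarrow> bool" where
  st_head: "head_red \<Delta> M N \<Longrightarrow> step \<Delta> M N"
| st_pi1: "step \<Delta> A A' \<Longrightarrow> step \<Delta> (Pi A B) (Pi A' B)"
| st_pi2: "step \<Delta> B B' \<Longrightarrow> step \<Delta> (Pi A B) (Pi A B')"
| st_app1: "step \<Delta> M M' \<Longrightarrow> step \<Delta> (App M N) (App M' N)"
| st_app2: "step \<Delta> N N' \<Longrightarrow> step \<Delta> (App M N) (App M N')"
| st_lab: "i < length Ms \<Longrightarrow> step \<Delta> (Ms ! i) M' \<Longrightarrow> step \<Delta> (Lab l Ms) (Lab l (Ms[i := M']))"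

definition steps :: "lctx \<Rightarrow> expr \<Rightarrow> expr \<Rightarrow> bool" where
  "steps \<Delta> = (step \<Delta>)\<^sup>*\<^sup>*"

inductive equiv :: "lctx \<Rightarrow> expr \<Rightarrow> expr \<Rightarrow> bool" where
  eq_red: "steps \<Delta> M L \<Longrightarrow> steps \<Delta> N L \<Longrightarrow> equiv \<Delta> M N"
| eq_eta1: "steps \<Delta> L (Lab l Ns) \<Longrightarrow> steps \<Delta> M M' \<Longrightarrow> (l, As, A, N, B) \<in> set \<Delta> \<Longrightarrow>
     length Ns = length As \<Longrightarrow>
     equiv \<Delta> (subst (up (sbl (rev Ns))) N) (App (ren Suc M') (Var 0)) \<Longrightarrow> equiv \<Delta> L M"
| eq_eta2: "steps \<Delta> L (Lab l Ns) \<Longrightarrow> steps \<Delta> M M' \<Longrightarrow> (l, As, A, N, B) \<in> set \<Delta> \<Longrightarrow>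
     length Ns = length As \<Longrightarrow>
     equiv \<Delta> (App (ren Suc M') (Var 0)) (subst (up (sbl (rev Ns))) N) \<Longrightarrow> equiv \<Delta> M L"

inductive typing :: "lctx \<Rightarrow> tctx \<Rightarrow> expr \<Rightarrow> expr \<Rightarrow> bool"
  and wf :: "lctx \<Rightarrow> tctx \<Rightarrow> bool" where
  t_var: "wf \<Delta> \<Gamma> \<Longrightarrow> i < length \<Gamma> \<Longrightarrow> typing \<Delta> \<Gamma> (Var i) (ren (\<lambda>j. j + Suc i) (\<Gamma> ! i))"
| t_univ: "wf \<Delta> \<Gamma> \<Longrightarrow> typing \<Delta> \<Gamma> (U i) (U (Suc i))"
| t_pi: "typing \<Delta> \<Gamma> A (U i) \<Longrightarrow> typing \<Delta> (A # \<Gamma>) B (U j) \<Longrightarrow>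
     typing \<Delta> \<Gamma> (Pi A B) (U (max i j))"
| t_app: "typing \<Delta> \<Gamma> M (Pi A B) \<Longrightarrow> typing \<Delta> \<Gamma> N A \<Longrightarrow>
     typing \<Delta> \<Gamma> (App M N) (subst (sbl [N]) B)"
| t_conv: "typing \<Delta> \<Gamma> M A \<Longrightarrow> typing \<Delta> \<Gamma> B (U i) \<Longrightarrow> equiv \<Delta> A B \<Longrightarrow>
     typing \<Delta> \<Gamma> M B"
| t_lab: "wf \<Delta> \<Gamma> \<Longrightarrow> (l, As, A, Mb, B) \<in> set \<Delta> \<Longrightarrow> length Ms = length As \<Longrightarrow>
     (\<forall>k < length Ms. typing \<Delta> \<Gamma> (Ms ! k) (subst (sbl (rev (take k Ms))) (As ! k))) \<Longrightarrow>
     typing \<Delta> \<Gamma> (Lab l Ms) (subst (sbl (rev Ms)) (Pi A B))"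
| wf_empty: "wf [] []"
| wf_label: "l \<notin> fst ` set \<Delta> \<Longrightarrow> typing \<Delta> (rev As) (Pi A B) (U i) \<Longrightarrow>
     typing \<Delta> (A # rev As) Mb B \<Longrightarrow> wf ((l, As, A, Mb, B) # \<Delta>) []"
| wf_cons: "wf \<Delta> \<Gamma> \<Longrightarrow> typing \<Delta> \<Gamma> A (U i) \<Longrightarrow> wf \<Delta> (A # \<Gamma>)"

end

theory Submission
  imports Defs
begin

lemma head_red_mono: "head_red \<Delta> M N \<Longrightarrow> set \<Delta> \<subseteq> set \<Delta>' \<Longrightarrow> head_red \<Delta>' M N"
  by (induction rule: head_red.induct) (auto intro: head_red.intros)

lemma step_mono: "step \<Delta> M N \<Longrightarrow> set \<Delta> \<subseteq> set \<Delta>' \<Longrightarrow> step \<Delta>' M N"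
  by (induction rule: step.induct) (auto intro: step.intros head_red_mono)

lemma steps_mono: "steps \<Delta> M N \<Longrightarrow> set \<Delta> \<subseteq> set \<Delta>' \<Longrightarrow> steps \<Delta>' M N"
  unfolding steps_def by (metis mono_rtranclp step_mono)

lemma equiv_mono: "equiv \<Delta> M N \<Longrightarrow> set \<Delta> \<subseteq> set \<Delta>' \<Longrightarrow> equiv \<Delta>' M N"
  by (induction rule: equiv.induct) (blast intro: equiv.intros steps_mono)+

text \<open>The only place where well-formedness of the larger label context is used is the empty
  type context: there the derivation of \<open>wf \<Delta> []\<close> (by \<open>wf_empty\<close> or \<open>wf_label\<close>) cannot be
  transported rule by rule, since a fresh label of \<open>\<Delta>\<close> need not be fresh in \<open>\<Delta>'\<close>.\<close>
lemma typing_wf_label_weakening: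
  shows "typing \<Delta> \<Gamma> M A \<Longrightarrow> wf \<Delta>' [] \<Longrightarrow> set \<Delta> \<subseteq> set \<Delta>' \<Longrightarrow> typing \<Delta>' \<Gamma> M A"
    and "wf \<Delta> \<Gamma> \<Longrightarrow> wf \<Delta>' [] \<Longrightarrow> set \<Delta> \<subseteq> set \<Delta>' \<Longrightarrow> wf \<Delta>' \<Gamma>"
proof (induction rule: typing_wf.inducts)
  case (t_var \<Delta> \<Gamma> i)
  then show ?case by (intro typing_wf.t_var) simp_all
next
  case (t_conv \<Delta> \<Gamma> M A B i)
  then show ?case by (blast intro: typing_wf.t_conv equiv_mono)
next
  case (t_lab \<Delta> \<Gamma> l As A Mb B Ms)
  then show ?case by (intro typing_wf.t_lab) auto
qed (auto intro: typing_wf.intros)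

theorem lemma3p8:
  assumes "typing \<Delta>1 \<Gamma> M A"
    and "wf \<Delta>2 []"
    and "set \<Delta>1 \<subseteq> set \<Delta>2"
  shows "typing \<Delta>2 \<Gamma> M A"
  using assms by (rule typing_wf_label_weakening(1))

end
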